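(* Let $X\in\mathbb{R}^{d\times n}$, $\rho>0$, $\beta_0>0$, $\gamma>1$ and $\beta_k=\gamma^k\beta_0$. Let $F(Z)=\log\det(I+Z^TZ)$ for $Z\in\mathbb{R}^{n\times n}$ and $$L(Z,W,Y,\beta)=F(Z)+\rho\|X-XW\|_F^2+\frac{\beta}{2}\|Z-W\|_F^2+\mathrm{Tr}(Y^T(Z-W)).$$ Let $Z_0\in\mathbb{R}^{n\times n}$, $Y_0=0$, and for $k\ge 0$ define $W_{k+1}=(\beta_k I+2\rho X^TX)^{-1}(2\rho X^TX+Y_k+\beta_k Z_k)$, let $Z_{k+1}$ be a global minimizer of $Z\mapsto L(Z,W_{k+1},Y_k,\beta_k)$, and set $Y_{k+1}=Y_k+\beta_k(Z_{k+1}-W_{k+1})$. Assume moreover that $\beta_{k-1}(Z_k-Z_{k-1})\to 0$ as $k\to\infty$. Then the sequence $\{(Y_k,W_k,Z_k)\}$ has at least one accumulation point $(Y^*,W^*,Z^* )$, and every such accumulation point satisfies the KKT conditions $$Z^*=W^*,\qquad \nabla F(Z^* )+Y^*=0,\qquad 2\rho X^TX(W^*-I)=Y^*,$$ i.e. $(W^*,Z^* )$ is a stationary point of the problem $\min_{Z,W}\ \log\det(I+Z^TZ)+\rho\|X-XW\|_F^2$ subject to $Z=W$.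
   Context: $I$ is the $n\times n$ identity matrix, $\|\cdot\|_F$ the Frobenius norm, $\mathrm{Tr}$ the trace. $\nabla F(Z)=2Z(I+Z^TZ)^{-1}$ is the gradient of $F$; equivalently $U\,\mathrm{diag}\big(\tfrac{2\sigma_i}{1+\sigma_i^2}\big)V^T$ for an SVD $Z=U\,\mathrm{diag}(\sigma_i)V^T$. *)

theory Defs
  imports "HOL-Analysis.Analysis"
begin

text \<open>Matrices are Cartesian-product types: an m x n real matrix is real^'n^'m
  (rows indexed by 'm). Identity is mat 1, product is **.\<close>

definition frob_norm :: "real^'n^'m \<Rightarrow> real" where
  "frob_norm A = sqrt (\<Sum>i\<in>UNIV. \<Sum>j\<in>UNIV. (A $ i $ j)^2)"

definition logdet_F :: "real^'n^'n \<Rightarrow> real" where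
  "logdet_F Z = ln (det (mat 1 + transpose Z ** Z))"

definition grad_F :: "real^'n^'n \<Rightarrow> real^'n^'n" where
  "grad_F Z = 2 *\<^sub>R (Z ** matrix_inv (mat 1 + transpose Z ** Z))"

definition aug_lagr :: "real^'n^'d \<Rightarrow> real \<Rightarrow> real^'n^'n \<Rightarrow> real^'n^'n \<Rightarrow> real^'n^'n \<Rightarrow> real \<Rightarrow> real" where
  "aug_lagr X \<rho> Z W Y \<beta> =
     logdet_F Z + \<rho> * (frob_norm (X - X ** W))^2 + \<beta> / 2 * (frob_norm (Z - W))^2
     + trace (transpose Y ** (Z - W))"

definition accum_point :: "(nat \<Rightarrow> 'a::topological_space) \<Rightarrow> 'a \<Rightarrow> bool" where
  "accum_point s p \<longleftrightarrow> (\<exists>r. strict_mono r \<and> (s \<circ> r) \<longlonglongrightarrow> p)"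

end

theory Submission
  imports Defs
begin

(* Since Z_{k+1} globally minimises the augmented Lagrangian, its first-order condition
   combined with the multiplier update reads grad F(Z_{k+1}) + Y_{k+1} = 0, i.e.
   Y_{k+1} (I + Z_{k+1}^T Z_{k+1}) = -2 Z_{k+1}; pairing this with Y_{k+1} gives
   |Y_{k+1}| <= 2 |Z_{k+1}|.  The W-update is the normal equation of the W-subproblem, and with
   the multiplier update it becomes beta_k (Z_{k+1} - Z_k) = Y_{k+1} + 2 rho X^T X (I - W_{k+1}).
   As beta_k grows geometrically while beta_k (Z_{k+1} - Z_k) stays bounded, the steps of Z are
   summable, so Z converges; then Y is bounded and W_{k+1} = Z_{k+1} - (Y_{k+1} - Y_k) / beta_k
   has the same limit.  Boundedness yields an accumulation point, and both identities pass to
   the limit along any convergent subsequence. *)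

lemma inner_matrix:
  "inner (A::real^'n^'m) B = (\<Sum>i\<in>UNIV. \<Sum>j\<in>UNIV. A$i$j * B$i$j)"
  by (simp add: inner_vec_def)

lemma frob_norm_eq_norm: "frob_norm (A::real^'n^'m) = norm A"
  unfolding frob_norm_def norm_eq_sqrt_inner inner_matrix by (simp add: power2_eq_square)

lemma trace_transpose_mult: "trace (transpose (A::real^'n^'m) ** B) = inner A B"
  unfolding trace_def transpose_def matrix_matrix_mult_def inner_matrix
  by simp (rule sum.swap)

lemma trace_transpose: "trace (transpose (A::'a::comm_semiring_1^'n^'n)) = trace A"
  by (simp add: trace_def transpose_def)

lemma transpose_add: "transpose ((A::'a::semiring_1^'n^'m) + B) = transpose A + transpose B"
  by (simp add: transpose_def vec_eq_iff)

lemma matrix_add_rdistrib: "((A::'a::semiring_1^'n^'m) + B) ** (C::'a^'k^'n) = A ** C + B ** C"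
  by (simp add: matrix_matrix_mult_def vec_eq_iff sum.distrib algebra_simps)

lemma matrix_diff_ldistrib: "(A::'a::ring_1^'n^'m) ** ((B::'a^'k^'n) - C) = A ** B - A ** C"
  by (simp add: matrix_matrix_mult_def vec_eq_iff sum_subtractf algebra_simps)

lemma matrix_neg_left: "(- (A::'a::ring_1^'n^'m)) ** (B::'a^'k^'n) = - (A ** B)"
  by (simp add: matrix_matrix_mult_def vec_eq_iff sum_negf)

lemma matrix_scaleR_right: "(A::real^'n^'m) ** (c *\<^sub>R (B::real^'k^'n)) = c *\<^sub>R (A ** B)"
  by (simp add: matrix_scalar_ac scalar_matrix_assoc)

lemma inner_matrix_mult_right:
  "inner (P::real^'n^'m) (Q ** (R::real^'n^'k)) = inner (P ** transpose R) Q"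
proof -
  have "inner P (Q ** R) = trace ((transpose P ** Q) ** R)"
    by (simp add: trace_transpose_mult[symmetric] matrix_mul_assoc)
  also have "\<dots> = trace (R ** (transpose P ** Q))"
    by (rule trace_mul_sym)
  also have "\<dots> = inner (P ** transpose R) Q"
    by (simp add: trace_transpose_mult[symmetric] matrix_transpose_mul matrix_mul_assoc)
  finally show ?thesis .
qed

lemma matrix_inv_inverse:
  assumes "invertible (A::'a::semiring_1^'n^'m)"
  shows "A ** matrix_inv A = mat 1" "matrix_inv A ** A = mat 1"
  using someI_ex[OF assms[unfolded invertible_def]] by (simp_all add: matrix_inv_def)

lemma transpose_matrix_inv_symmetric:
  assumes "transpose M = M" "invertible (M::real^'n^'n)"
  shows "transpose (matrix_inv M) = matrix_inv M"
proof -
  have "transpose (matrix_inv M) ** M = mat 1"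
    by (metis assms matrix_inv_inverse(1) matrix_transpose_mul transpose_mat)
  then show ?thesis
    by (metis assms(2) matrix_inv_inverse(1) matrix_mul_assoc matrix_mul_lid matrix_mul_rid)
qed

lemma invertible_scaleR_mat_plus_gram:
  fixes B :: "real^'n^'m"
  assumes "c > 0" "d \<ge> 0"
  shows "invertible (c *\<^sub>R mat 1 + d *\<^sub>R (transpose B ** B))"
  unfolding invertible_left_inverse matrix_left_invertible_ker
proof (intro allI impI)
  fix x :: "real^'n"
  assume "(c *\<^sub>R mat 1 + d *\<^sub>R (transpose B ** B)) *v x = 0"
  then have "c *\<^sub>R x + d *\<^sub>R (transpose B *v (B *v x)) = 0"
    by (simp add: matrix_vector_mult_add_rdistrib matrix_vector_mul_assoc
        scaleR_matrix_vector_assoc[symmetric])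
  moreover have "inner x (transpose B *v (B *v x)) = inner (B *v x) (B *v x)"
    by (metis dot_lmul_matrix inner_commute transpose_matrix_vector)
  ultimately have "c * inner x x + d * inner (B *v x) (B *v x) = 0"
    by (metis inner_add_right inner_scaleR_right inner_zero_right)
  moreover have "d * inner (B *v x) (B *v x) \<ge> 0"
    using assms(2) by simp
  ultimately have "inner x x \<le> 0"
    using assms(1) by (simp add: mult_le_0_iff add_nonneg_eq_0_iff)
  then show "x = 0"
    by (metis inner_eq_zero_iff inner_ge_zero order_antisym)
qed

lemma det_mat_1_plus_gram_pos: "det (mat 1 + transpose Z ** (Z::real^'n^'n)) > 0"
proof -
  define h where "h = (\<lambda>s::real. det (mat 1 + s *\<^sub>R (transpose Z ** Z)))"
  have "continuous_on {0..1} h"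
    unfolding h_def det_def by (simp add: mat_def) (intro continuous_intros)
  moreover have "h s \<noteq> 0" if "0 \<le> s" for s
    using invertible_scaleR_mat_plus_gram[of 1 s Z] that by (simp add: h_def invertible_det_nz)
  moreover have "h 0 = 1" by (simp add: h_def)
  ultimately have "h 1 > 0"
    using IVT2'[of h 1 0 0] by force
  then show ?thesis by (simp add: h_def)
qed

lemma prod_fixed_point_indicator_eq_0:
  assumes "p permutes (UNIV::'n::finite set)" "p \<noteq> id"
  shows "(\<Prod>j\<in>UNIV - {i}. if j = p j then 1 else 0 :: 'a::comm_semiring_1) = 0"
proof -
  obtain j where j: "p j \<noteq> j" using assms(2) by (metis eq_id_iff)
  moreover have "p (p j) \<noteq> p j"
    using j permutes_inj[OF assms(1)] by (metis injD)
  \<comment> \<open>a permutation moving j also moves p j, so it moves some point other than i\<close>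
  ultimately obtain k where "k \<noteq> i" "p k \<noteq> k"
    by metis
  then show ?thesis
    by (intro prod_zero) (auto intro!: bexI[of _ k])
qed

lemma det_mat_1_plus_has_derivative_trace:
  fixes E G :: "real^'n^'n"
  shows "((\<lambda>t. det (mat 1 + t *\<^sub>R E + t\<^sup>2 *\<^sub>R G)) has_real_derivative trace E) (at 0)"
proof -
  define f where "f p i t = (if i = p i then 1 else 0) + t * E$i$p i + t\<^sup>2 * G$i$p i"
    for p :: "'n \<Rightarrow> 'n" and i and t :: real
  define P where "P = {p. p permutes (UNIV::'n set)}"
  define d where "d p = (\<Sum>i\<in>UNIV. E$i$p i * (\<Prod>j\<in>UNIV - {i}. f p j 0))" for p
  have det_eq: "(\<lambda>t. det (mat 1 + t *\<^sub>R E + t\<^sup>2 *\<^sub>R G)) = (\<lambda>t. \<Sum>p\<in>P. of_int (sign p) * (\<Prod>i\<in>UNIV. f p i t))"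
    unfolding det_def f_def P_def by (simp add: mat_def)
  have prod_deriv: "((\<lambda>t. \<Prod>i\<in>UNIV. f p i t) has_real_derivative d p) (at 0)" for p
  proof -
    have "(f p i has_derivative (*) (E$i$p i)) (at 0)" for i
      unfolding f_def has_field_derivative_def[symmetric]
      by (auto intro!: derivative_eq_intros)
    then have "((\<lambda>t. \<Prod>i\<in>UNIV. f p i t) has_derivative
        (\<lambda>y. \<Sum>i\<in>UNIV. (E$i$p i * y) * (\<Prod>j\<in>UNIV - {i}. f p j 0))) (at 0)"
      by (intro has_derivative_prod) auto
    then show ?thesis
      unfolding has_field_derivative_def d_def
      by (rule has_derivative_eq_rhs) (simp add: fun_eq_iff sum_distrib_left mult_ac)
  qed
  have trace_eq: "(\<Sum>p\<in>P. of_int (sign p) * d p) = trace E"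
  proof -
    have "d p = 0" if "p \<in> P" "p \<noteq> id" for p
      using that by (simp add: d_def f_def P_def prod_fixed_point_indicator_eq_0)
    then have "(\<Sum>p\<in>P. of_int (sign p) * d p) = (\<Sum>p\<in>{id}. of_int (sign p) * d p)"
      by (intro sum.mono_neutral_right) (auto simp: P_def finite_permutations permutes_id)
    then show ?thesis by (simp add: sign_id d_def f_def trace_def)
  qed
  show ?thesis
    unfolding det_eq trace_eq[symmetric] by (intro DERIV_sum DERIV_cmult prod_deriv)
qed

lemma logdet_F_has_directional_derivative:
  fixes Z H :: "real^'n^'n"
  shows "((\<lambda>t. logdet_F (Z + t *\<^sub>R H)) has_real_derivative inner (grad_F Z) H) (at 0)"
proof -
  define M where "M = mat 1 + transpose Z ** Z"
  define P where "P = matrix_inv M"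
  define B where "B = transpose H ** Z + transpose Z ** H"
  define d where "d t = det (mat 1 + t *\<^sub>R (P ** B) + t\<^sup>2 *\<^sub>R (P ** transpose H ** H))" for t
  have invM: "invertible M"
    using invertible_scaleR_mat_plus_gram[of 1 1 Z] by (simp add: M_def)
  have symP: "transpose P = P"
    unfolding P_def M_def
    by (rule transpose_matrix_inv_symmetric[OF _ invM[unfolded M_def]])
       (simp add: transpose_add matrix_transpose_mul)
  \<comment> \<open>factor out M so that the remaining determinant is a perturbation of the identity\<close>
  have "M ** (mat 1 + t *\<^sub>R (P ** B) + t\<^sup>2 *\<^sub>R (P ** transpose H ** H))
      = M + t *\<^sub>R B + t\<^sup>2 *\<^sub>R (transpose H ** H)" for t
    by (simp add: P_def matrix_inv_inverse(1)[OF invM] matrix_add_ldistrib matrix_scaleR_right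
        matrix_mul_assoc)
  also have "\<dots> t = mat 1 + transpose (Z + t *\<^sub>R H) ** (Z + t *\<^sub>R H)" for t
    by (simp add: M_def B_def transpose_add transpose_scalar matrix_add_ldistrib matrix_add_rdistrib
        matrix_scaleR_right scalar_matrix_assoc[symmetric] scaleR_add_right power2_eq_square add_ac)
  finally have logdet_eq: "logdet_F (Z + t *\<^sub>R H) = ln (det M * d t)" for t
    by (simp add: logdet_F_def d_def det_mul[symmetric])
  have "(d has_real_derivative trace (P ** B)) (at 0)"
    unfolding d_def by (rule det_mat_1_plus_has_derivative_trace)
  moreover have "det M > 0" "d 0 = 1"
    by (simp_all add: M_def det_mat_1_plus_gram_pos d_def)
  ultimately have "((\<lambda>t. ln (det M * d t)) has_real_derivative trace (P ** B)) (at 0)"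
    by (auto intro!: derivative_eq_intros)
  moreover have "trace (P ** B) = inner (grad_F Z) H"
  proof -
    have "trace (P ** transpose H ** Z) = trace (transpose (Z ** P ** transpose H))"
      by (metis trace_mul_sym trace_transpose matrix_mul_assoc)
    also have "\<dots> = trace (P ** transpose Z ** H)"
      by (metis matrix_transpose_mul symP trace_mul_sym transpose_transpose matrix_mul_assoc)
    finally have "trace (P ** B) = 2 * trace (P ** transpose Z ** H)"
      by (simp add: B_def matrix_add_ldistrib trace_add matrix_mul_assoc)
    also have "\<dots> = inner (grad_F Z) H"
      unfolding grad_F_def inner_scaleR_left
      by (simp flip: trace_transpose_mult add: P_def M_def matrix_transpose_mul
          symP[unfolded P_def M_def])
    finally show ?thesis .
  qed
  ultimately show ?thesis by (simp add: logdet_eq)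
qed

lemma aug_lagr_has_directional_derivative:
  fixes X :: "real^'n^'d" and Z W Y H :: "real^'n^'n"
  shows "((\<lambda>t. aug_lagr X \<rho> (Z + t *\<^sub>R H) W Y \<beta>) has_real_derivative
           inner (grad_F Z + Y + \<beta> *\<^sub>R (Z - W)) H) (at 0)"
proof -
  define V where "V = Z - W"
  have shift: "Z + t *\<^sub>R H - W = V + t *\<^sub>R H" for t
    by (simp add: V_def)
  have "(norm (V + t *\<^sub>R H))\<^sup>2 = (norm V)\<^sup>2 + 2 * t * inner V H + t\<^sup>2 * (norm H)\<^sup>2" for t
    unfolding power2_norm_eq_inner
    by (simp add: inner_add_left inner_add_right inner_commute power2_eq_square algebra_simps)
  then have L_eq: "(\<lambda>t. aug_lagr X \<rho> (Z + t *\<^sub>R H) W Y \<beta>) = (\<lambda>t. logdet_F (Z + t *\<^sub>R H)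
      + \<rho> * (norm (X - X ** W))\<^sup>2 + \<beta> / 2 * ((norm V)\<^sup>2 + 2 * t * inner V H + t\<^sup>2 * (norm H)\<^sup>2)
      + (inner Y V + t * inner Y H))"
    by (simp add: fun_eq_iff aug_lagr_def frob_norm_eq_norm trace_transpose_mult shift inner_add_right)
  have "((\<lambda>t. logdet_F (Z + t *\<^sub>R H) + \<rho> * (norm (X - X ** W))\<^sup>2
      + \<beta> / 2 * ((norm V)\<^sup>2 + 2 * t * inner V H + t\<^sup>2 * (norm H)\<^sup>2) + (inner Y V + t * inner Y H))
      has_real_derivative inner (grad_F Z) H + \<beta> / 2 * (2 * inner V H) + inner Y H) (at 0)"
    by (rule derivative_eq_intros logdet_F_has_directional_derivative | simp)+
  moreover have "inner (grad_F Z) H + \<beta> / 2 * (2 * inner V H) + inner Y H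
      = inner (grad_F Z + Y + \<beta> *\<^sub>R (Z - W)) H"
    by (simp add: V_def inner_add_left algebra_simps)
  ultimately show ?thesis
    unfolding L_eq by simp
qed

lemma aug_lagr_argmin_stationary:
  fixes X :: "real^'n^'d" and Z W Y :: "real^'n^'n"
  assumes "\<And>Z'. aug_lagr X \<rho> Z W Y \<beta> \<le> aug_lagr X \<rho> Z' W Y \<beta>"
  shows "grad_F Z + Y + \<beta> *\<^sub>R (Z - W) = 0"
proof -
  define G where "G = grad_F Z + Y + \<beta> *\<^sub>R (Z - W)"
  \<comment> \<open>G is the gradient of L at Z, so the derivative of L along G is the squared norm of G\<close>
  have "inner G G = 0"
    using aug_lagr_has_directional_derivative[of X \<rho> Z G W Y \<beta>] assms
    by (intro DERIV_local_min[of _ _ 0 1]) (auto simp: G_def)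
  then show ?thesis by (simp add: G_def)
qed

lemma grad_F_add_eq_0_iff:
  fixes Z Y :: "real^'n^'n"
  shows "grad_F Z + Y = 0 \<longleftrightarrow> Y ** (mat 1 + transpose Z ** Z) = - (2 *\<^sub>R Z)"
proof -
  have invM: "invertible (mat 1 + transpose Z ** Z)"
    using invertible_scaleR_mat_plus_gram[of 1 1 Z] by simp
  have "grad_F Z + Y = 0 \<longleftrightarrow> Y = - (2 *\<^sub>R Z) ** matrix_inv (mat 1 + transpose Z ** Z)"
    by (auto simp: grad_F_def scalar_matrix_assoc matrix_neg_left eq_neg_iff_add_eq_0 add.commute)
  also have "\<dots> \<longleftrightarrow> Y ** (mat 1 + transpose Z ** Z) = - (2 *\<^sub>R Z)"
    by (metis invM matrix_inv_inverse matrix_mul_assoc matrix_mul_rid)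
  finally show ?thesis .
qed

lemma norm_le_twice_if_grad_F_add_eq_0:
  fixes Z Y :: "real^'n^'n"
  assumes "grad_F Z + Y = 0"
  shows "norm Y \<le> 2 * norm Z"
proof -
  have "Y + (Y ** transpose Z) ** Z = - (2 *\<^sub>R Z)"
    using assms by (simp add: grad_F_add_eq_0_iff matrix_add_ldistrib matrix_mul_assoc)
  \<comment> \<open>pairing with Y: the left-hand side becomes a sum of two squared norms\<close>
  then have "inner Y Y + inner (Y ** transpose Z) (Y ** transpose Z) = - 2 * inner Y Z"
    by (metis inner_add_right inner_matrix_mult_right inner_minus_right inner_scaleR_right
        mult_minus_left)
  then have "(norm Y)\<^sup>2 \<le> - 2 * inner Y Z"
    unfolding power2_norm_eq_inner using inner_ge_zero[of "Y ** transpose Z"] by linarith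
  also have "\<dots> \<le> 2 * (norm Y * norm Z)"
    using norm_cauchy_schwarz[of Y "- Z"] by simp
  finally have "norm Y * norm Y \<le> norm Y * (2 * norm Z)"
    by (simp add: power2_eq_square)
  then show ?thesis
    by (cases "norm Y = 0") (auto simp: mult_le_cancel_left_pos)
qed

lemma tendsto_matrix_mult [tendsto_intros]:
  fixes f :: "'a \<Rightarrow> real^'n^'m" and g :: "'a \<Rightarrow> real^'k^'n"
  assumes "(f \<longlongrightarrow> A) F" "(g \<longlongrightarrow> B) F"
  shows "((\<lambda>x. f x ** g x) \<longlongrightarrow> A ** B) F"
  unfolding matrix_matrix_mult_def
  by (intro tendsto_vec_lambda tendsto_sum tendsto_mult tendsto_vec_nth assms)

lemma tendsto_transpose [tendsto_intros]:
  fixes f :: "'a \<Rightarrow> real^'n^'m"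
  assumes "(f \<longlongrightarrow> A) F"
  shows "((\<lambda>x. transpose (f x)) \<longlongrightarrow> transpose A) F"
  unfolding transpose_def
  by (intro tendsto_vec_lambda tendsto_vec_nth assms)

lemma convergent_if_weighted_steps_bounded:
  fixes x :: "nat \<Rightarrow> 'a::banach" and w :: "nat \<Rightarrow> real"
  assumes w_pos: "\<And>k. w k > 0" and "summable (\<lambda>k. 1 / w k)"
    and "Bseq (\<lambda>k. w k *\<^sub>R (x (Suc k) - x k))"
  shows "convergent x"
proof -
  obtain K where K: "\<And>k. norm (w k *\<^sub>R (x (Suc k) - x k)) \<le> K"
    using assms(3) by (meson BseqE)
  have step_bound: "norm (x (Suc k) - x k) \<le> K * (1 / w k)" for k
  proof -
    have "w k * norm (x (Suc k) - x k) \<le> K"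
      using K[of k] w_pos[of k] by (metis abs_of_pos norm_scaleR)
    then show ?thesis
      using w_pos[of k] by (simp add: field_simps)
  qed
  have "summable (\<lambda>k. x (Suc k) - x k)"
    using summable_mult[OF assms(2)] step_bound by (rule summable_comparison_test')
  then have "convergent (\<lambda>n. x n - x 0)"
    by (simp add: summable_iff_convergent sum_lessThan_telescope)
  then show ?thesis
    by (simp add: convergent_diff_const_right_iff)
qed

locale admm_iteration =
  fixes X :: "real^'n^'d"
    and \<rho> \<beta>0 \<gamma> :: real
    and \<beta> :: "nat \<Rightarrow> real"
    and Z W Y :: "nat \<Rightarrow> real^'n^'n"
  assumes rho_pos: "\<rho> > 0"
    and beta0_pos: "\<beta>0 > 0"
    and gamma_gt: "\<gamma> > 1"
    and beta_def: "\<And>k. \<beta> k = \<gamma> ^ k * \<beta>0"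
    and Y0: "Y 0 = 0"
    and W_step: "\<And>k. W (Suc k) =
        matrix_inv (\<beta> k *\<^sub>R mat 1 + (2 * \<rho>) *\<^sub>R (transpose X ** X))
        ** ((2 * \<rho>) *\<^sub>R (transpose X ** X) + Y k + \<beta> k *\<^sub>R Z k)"
    and Z_step: "\<And>k Z'. aug_lagr X \<rho> (Z (Suc k)) (W (Suc k)) (Y k) (\<beta> k)
                       \<le> aug_lagr X \<rho> Z' (W (Suc k)) (Y k) (\<beta> k)"
    and Y_step: "\<And>k. Y (Suc k) = Y k + \<beta> k *\<^sub>R (Z (Suc k) - W (Suc k))"
    and Z_diff: "(\<lambda>k. \<beta> k *\<^sub>R (Z (Suc k) - Z k)) \<longlonglongrightarrow> 0"
begin

lemma beta_pos: "\<beta> k > 0"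
  using beta_def beta0_pos gamma_gt by simp

lemma summable_inverse_beta: "summable (\<lambda>k. 1 / \<beta> k)"
proof -
  have "(\<lambda>k. 1 / \<beta> k) = (\<lambda>k. 1 / \<beta>0 * (1 / \<gamma>) ^ k)"
    by (simp add: beta_def power_one_over mult.commute)
  then show ?thesis
    using gamma_gt by (simp add: summable_geometric summable_mult)
qed

lemma W_Suc_normal_equation:
  "\<beta> k *\<^sub>R W (Suc k) + (2 * \<rho>) *\<^sub>R (transpose X ** X ** W (Suc k))
     = (2 * \<rho>) *\<^sub>R (transpose X ** X) + Y k + \<beta> k *\<^sub>R Z k"
proof -
  have "invertible (\<beta> k *\<^sub>R mat 1 + (2 * \<rho>) *\<^sub>R (transpose X ** X))"
    using beta_pos rho_pos by (intro invertible_scaleR_mat_plus_gram) auto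
  then have "(\<beta> k *\<^sub>R mat 1 + (2 * \<rho>) *\<^sub>R (transpose X ** X)) ** W (Suc k)
      = (2 * \<rho>) *\<^sub>R (transpose X ** X) + Y k + \<beta> k *\<^sub>R Z k"
    by (simp add: W_step matrix_mul_assoc matrix_inv_inverse)
  then show ?thesis
    by (simp add: matrix_add_rdistrib scalar_matrix_assoc[symmetric])
qed

lemma grad_F_Z_Suc_add_Y_Suc: "grad_F (Z (Suc k)) + Y (Suc k) = 0"
  using aug_lagr_argmin_stationary[OF Z_step] by (simp add: Y_step add.assoc)

lemma beta_Z_step_eq_residual:
  "\<beta> k *\<^sub>R (Z (Suc k) - Z k)
     = Y (Suc k) + (2 * \<rho>) *\<^sub>R (transpose X ** X - transpose X ** X ** W (Suc k))"
  using W_Suc_normal_equation[of k] by (simp add: Y_step algebra_simps)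

lemma convergent_Z: "convergent Z"
  using Z_diff beta_pos summable_inverse_beta
  by (intro convergent_if_weighted_steps_bounded[where w = \<beta>])
     (auto intro: convergent_imp_Bseq convergentI)

lemma Bseq_Y: "Bseq Y"
proof -
  obtain K where K: "\<And>k. norm (Z k) \<le> K"
    using convergent_Z by (meson BseqE convergent_imp_Bseq)
  have "norm (Y k) \<le> 2 * K" for k
  proof (cases k)
    case 0
    then show ?thesis
      using Y0 K[of 0] norm_ge_zero[of "Z 0"] by (simp del: norm_ge_zero)
  next
    case (Suc j)
    then show ?thesis
      using norm_le_twice_if_grad_F_add_eq_0[OF grad_F_Z_Suc_add_Y_Suc[of j]] K[of k] by simp
  qed
  then show ?thesis by (intro BseqI')
qed

lemma W_tendsto_lim_Z: "W \<longlonglongrightarrow> lim Z"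
proof -
  obtain K where K: "\<And>k. norm (Y k) \<le> K"
    using Bseq_Y by (meson BseqE)
  have "norm (Y (Suc k) - Y k) \<le> K + K" for k
    using K[of k] K[of "Suc k"] norm_triangle_ineq4[of "Y (Suc k)" "Y k"] by linarith
  then have "Bseq (\<lambda>k. Y (Suc k) - Y k)"
    by (rule BseqI')
  moreover have "Zfun (\<lambda>k. 1 / \<beta> k) sequentially"
    using summable_LIMSEQ_zero[OF summable_inverse_beta] by (simp add: tendsto_Zfun_iff)
  ultimately have "Zfun (\<lambda>k. (1 / \<beta> k) *\<^sub>R (Y (Suc k) - Y k)) sequentially"
    by (intro bounded_bilinear.Zfun_prod_Bfun[OF bounded_bilinear_scaleR])
  then have "(\<lambda>k. (1 / \<beta> k) *\<^sub>R (Y (Suc k) - Y k)) \<longlonglongrightarrow> 0"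
    by (simp add: tendsto_Zfun_iff)
  moreover have "Z \<longlonglongrightarrow> lim Z"
    using convergent_Z by (simp add: convergent_LIMSEQ_iff)
  ultimately have "(\<lambda>k. Z (Suc k) - (1 / \<beta> k) *\<^sub>R (Y (Suc k) - Y k)) \<longlonglongrightarrow> lim Z - 0"
    by (intro tendsto_diff) (rule LIMSEQ_Suc)
  moreover have "W (Suc k) = Z (Suc k) - (1 / \<beta> k) *\<^sub>R (Y (Suc k) - Y k)" for k
    using beta_pos[of k] by (simp add: Y_step)
  ultimately have "(\<lambda>k. W (Suc k)) \<longlonglongrightarrow> lim Z"
    by simp
  then show ?thesis
    by (rule LIMSEQ_imp_Suc)
qed


lemma residual_tendsto_0:
  "(\<lambda>k. Y k + (2 * \<rho>) *\<^sub>R (transpose X ** X - transpose X ** X ** W k)) \<longlonglongrightarrow> 0"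
  using Z_diff unfolding beta_Z_step_eq_residual by (rule LIMSEQ_imp_Suc)

lemma eventually_multiplier_equation:
  "eventually (\<lambda>k. Y k ** (mat 1 + transpose (Z k) ** Z k) + 2 *\<^sub>R Z k = 0) sequentially"
proof (rule eventually_sequentiallyI[of 1])
  fix k :: nat
  assume "1 \<le> k"
  then obtain j where "k = Suc j"
    by (metis Suc_le_D One_nat_def)
  then show "Y k ** (mat 1 + transpose (Z k) ** Z k) + 2 *\<^sub>R Z k = 0"
    using grad_F_Z_Suc_add_Y_Suc[of j] by (simp add: grad_F_add_eq_0_iff)
qed

lemma accum_point_exists: "\<exists>p. accum_point (\<lambda>k. (Y k, W k, Z k)) p"
proof -
  obtain Yl r where r: "strict_mono r" and "(Y \<circ> r) \<longlonglongrightarrow> Yl"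
    using Bseq_Y bounded_imp_convergent_subsequence by (metis Bseq_eq_bounded)
  moreover have "(W \<circ> r) \<longlonglongrightarrow> lim Z" "(Z \<circ> r) \<longlonglongrightarrow> lim Z"
    using W_tendsto_lim_Z convergent_Z r
    by (simp_all add: LIMSEQ_subseq_LIMSEQ convergent_LIMSEQ_iff)
  ultimately have "((\<lambda>k. (Y k, W k, Z k)) \<circ> r) \<longlonglongrightarrow> (Yl, lim Z, lim Z)"
    unfolding o_def by (intro tendsto_Pair)
  then show ?thesis
    using r unfolding accum_point_def by blast
qed

lemma accum_point_KKT:
  assumes "accum_point (\<lambda>k. (Y k, W k, Z k)) (Ys, Ws, Zs)"
  shows "Zs = Ws \<and> grad_F Zs + Ys = 0 \<and> (2 * \<rho>) *\<^sub>R (transpose X ** X ** (Ws - mat 1)) = Ys"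
proof -
  obtain s where s: "strict_mono s"
    and lim: "(\<lambda>j. (Y (s j), W (s j), Z (s j))) \<longlonglongrightarrow> (Ys, Ws, Zs)"
    using assms unfolding accum_point_def o_def by blast
  have Ys: "(\<lambda>j. Y (s j)) \<longlonglongrightarrow> Ys" and Ws: "(\<lambda>j. W (s j)) \<longlonglongrightarrow> Ws"
    and Zs: "(\<lambda>j. Z (s j)) \<longlonglongrightarrow> Zs"
    using tendsto_fst[OF lim] tendsto_fst[OF tendsto_snd[OF lim]] tendsto_snd[OF tendsto_snd[OF lim]]
    by simp_all
  have along_s: "l = c" if "(\<lambda>j. f (s j)) \<longlonglongrightarrow> l" "f \<longlonglongrightarrow> c"
    for f :: "nat \<Rightarrow> real^'n^'n" and l c
    using that(1) LIMSEQ_subseq_LIMSEQ[OF that(2) s] unfolding o_def by (rule LIMSEQ_unique)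
  have "Zs = lim Z" "Ws = lim Z"
    using along_s[OF Zs] along_s[OF Ws W_tendsto_lim_Z] convergent_Z
    by (simp_all add: convergent_LIMSEQ_iff)
  moreover have "Ys ** (mat 1 + transpose Zs ** Zs) + 2 *\<^sub>R Zs = 0"
  proof (rule along_s)
    show "(\<lambda>j. Y (s j) ** (mat 1 + transpose (Z (s j)) ** Z (s j)) + 2 *\<^sub>R Z (s j))
        \<longlonglongrightarrow> Ys ** (mat 1 + transpose Zs ** Zs) + 2 *\<^sub>R Zs"
      by (intro tendsto_intros Ys Zs)
    show "(\<lambda>k. Y k ** (mat 1 + transpose (Z k) ** Z k) + 2 *\<^sub>R Z k) \<longlonglongrightarrow> 0"
      using eventually_multiplier_equation by (rule tendsto_eventually)
  qed
  moreover have "Ys + (2 * \<rho>) *\<^sub>R (transpose X ** X - transpose X ** X ** Ws) = 0"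
  proof (rule along_s)
    show "(\<lambda>j. Y (s j) + (2 * \<rho>) *\<^sub>R (transpose X ** X - transpose X ** X ** W (s j)))
        \<longlonglongrightarrow> Ys + (2 * \<rho>) *\<^sub>R (transpose X ** X - transpose X ** X ** Ws)"
      by (intro tendsto_intros Ys Ws)
  qed (rule residual_tendsto_0)
  then have "Ys = - ((2 * \<rho>) *\<^sub>R (transpose X ** X - transpose X ** X ** Ws))"
    by (simp add: add_eq_0_iff2)
  ultimately show ?thesis
    by (simp add: grad_F_add_eq_0_iff eq_neg_iff_add_eq_0 matrix_diff_ldistrib scaleR_diff_right)
qed

end

theorem theorem3:
  fixes X :: "real^'n^'d"
    and \<rho> \<beta>0 \<gamma> :: real
    and \<beta> :: "nat \<Rightarrow> real"
    and Z W Y :: "nat \<Rightarrow> real^'n^'n"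
  assumes rho_pos: "\<rho> > 0"
    and beta0_pos: "\<beta>0 > 0"
    and gamma_gt: "\<gamma> > 1"
    and beta_def: "\<And>k. \<beta> k = \<gamma> ^ k * \<beta>0"
    and Y0: "Y 0 = 0"
    and W_step: "\<And>k. W (Suc k) =
        matrix_inv (\<beta> k *\<^sub>R mat 1 + (2 * \<rho>) *\<^sub>R (transpose X ** X))
        ** ((2 * \<rho>) *\<^sub>R (transpose X ** X) + Y k + \<beta> k *\<^sub>R Z k)"
    and Z_step: "\<And>k Z'. aug_lagr X \<rho> (Z (Suc k)) (W (Suc k)) (Y k) (\<beta> k)
                       \<le> aug_lagr X \<rho> Z' (W (Suc k)) (Y k) (\<beta> k)"
    and Y_step: "\<And>k. Y (Suc k) = Y k + \<beta> k *\<^sub>R (Z (Suc k) - W (Suc k))"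
    and Z_diff: "(\<lambda>k. \<beta> k *\<^sub>R (Z (Suc k) - Z k)) \<longlonglongrightarrow> 0"
  shows "(\<exists>p. accum_point (\<lambda>k. (Y k, W k, Z k)) p) \<and>
         (\<forall>Ys Ws Zs. accum_point (\<lambda>k. (Y k, W k, Z k)) (Ys, Ws, Zs) \<longrightarrow>
            Zs = Ws \<and> grad_F Zs + Ys = 0 \<and>
            (2 * \<rho>) *\<^sub>R (transpose X ** X ** (Ws - mat 1)) = Ys)"
proof -
  interpret admm_iteration X \<rho> \<beta>0 \<gamma> \<beta> Z W Y
    by unfold_locales (fact assms)+
  show ?thesis
    using accum_point_exists accum_point_KKT by blast
qed

end
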